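(* For $\alpha>-1/2$ define the infinite matrix $h_{\mathbb{Z}}^{[\alpha]}$ by $$\big(h_{\mathbb{Z}}^{[\alpha]}\big)_{jk}=4^\alpha\int_0^1\sin^{2\alpha}\Big(\frac{\pi x}{2}\Big)\cos(|j-k|\pi x)\,\mathrm{d}x,\qquad j,k\in\mathbb{Z}.$$ For $n,m\in\mathbb{N}$ with $n\le m$ let $\Lambda_0=[-n,n]\cap\mathbb{Z}$ and $\Lambda=[-m,m]\cap\mathbb{Z}$, and let $h_\Lambda^{[\alpha]}=\iota_{\Lambda_0}^*(\overline{h}^{(q)}_\Lambda)^\alpha\iota_{\Lambda_0}$, with entries indexed by $j,k\in\{1,\dots,|\Lambda_0|\}$. Then, uniformly in $j,k\in\{1,\dots,|\Lambda_0|\}$, $$\big(h_\Lambda^{[\alpha]}\big)_{jk}=\big(h_{\mathbb{Z}}^{[\alpha]}\big)_{jk}+\mathcal{O}\Big(\frac{|\Lambda_0|}{|\Lambda|}\Big)\quad\text{for }\alpha\ge0,$$ $$\big(h_\Lambda^{[\alpha]}\big)_{jk}=\big(h_{\mathbb{Z}}^{[\alpha]}\big)_{jk}+\mathcal{O}\Big(\frac{|\Lambda|^{-2\alpha}+|\Lambda_0|^{1-2\alpha}}{|\Lambda|}\Big)\quad\text{for }\alpha\in(-1/2,0).$$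
   Context: $\overline{h}^{(q)}_\Lambda$ is the $|\Lambda|\times|\Lambda|$ matrix with entries $2$ on the diagonal, $-1$ for $|x-y|=1$, and $0$ otherwise (positive definite); $\iota_{\Lambda_0}:\mathbb{R}^{|\Lambda_0|}\hookrightarrow\mathbb{R}^{|\Lambda|}$ is the canonical embedding corresponding to $\Lambda_0\subset\Lambda$. The $\mathcal{O}$-terms are bounded by a constant (depending on $\alpha$ only) times the displayed quantity, uniformly in $n\le m$ and $j,k$. *)

theory Defs
  imports "HOL-Analysis.Analysis"
begin

definition mat_rpow :: "'i set \<Rightarrow> ('i \<Rightarrow> 'i \<Rightarrow> real) \<Rightarrow> real \<Rightarrow> ('i \<Rightarrow> 'i \<Rightarrow> real)" where
  "mat_rpow I A a = (SOME B. \<exists>U d.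
      (\<forall>i\<in>I. \<forall>j\<in>I. (\<Sum>l\<in>I. U l i * U l j) = (if i = j then 1 else 0)) \<and>
      (\<forall>l\<in>I. d l > 0) \<and>
      (\<forall>i\<in>I. \<forall>j\<in>I. A i j = (\<Sum>l\<in>I. U i l * d l * U j l)) \<and>
      (\<forall>i j. B i j = (if i \<in> I \<and> j \<in> I then (\<Sum>l\<in>I. U i l * d l powr a * U j l) else 0)))"

definition hbar :: "int \<Rightarrow> int \<Rightarrow> real" where
  "hbar x y = (if x = y then 2 else if \<bar>x - y\<bar> = 1 then -1 else 0)"

text \<open>h_Lambda^[alpha] = iota^* (hbar_Lambda)^alpha iota, with Lambda0 = [-n,n], Lambda = [-m,m],
  entries indexed by j,k in {1..2n+1}; index j corresponds to the site j - n - 1 in Lambda0.\<close>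
definition hLambda :: "nat \<Rightarrow> nat \<Rightarrow> real \<Rightarrow> int \<Rightarrow> int \<Rightarrow> real" where
  "hLambda n m a j k = mat_rpow {-int m..int m} hbar a (j - int n - 1) (k - int n - 1)"

definition hZ :: "real \<Rightarrow> int \<Rightarrow> int \<Rightarrow> real" where
  "hZ a j k = 4 powr a *
     (LBINT x=0..1. sin (pi * x / 2) powr (2 * a) * cos (real_of_int \<bar>j - k\<bar> * pi * x))"

end

(*
  The Dirichlet Laplacian hbar on [-m, m] is diagonalised by the sine modes sin (p l pi / M),
  M = 2 m + 2, with eigenvalues 2 - 2 cos (l pi / M) = g_1 (l / M), where
  g_a t = 4^a sin^(2a) (pi t / 2) is lap_symbol a t.  Hence, by the spectral calculus,
    (hbar^a)_xy = 1/M sum_l g_a (l/M) cos ((x - y) pi l/M)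
                  - 1/M sum_l (-1)^l g_a (l/M) cos ((x + y) pi l/M),
  while (h_Z^a)_xy is the integral of g_a t cos ((x - y) pi t) over [0, 1].  The first sum is a
  Riemann sum for this integral and the second one is an alternating sum.  As g_a is monotone on
  (0, 1] and bounded by a multiple of t^(-b), b = max 0 (-2a) < 1, comparing each grid cell with its
  right endpoint, resp. summing by parts, bounds both errors by O((M^b + |x| + |y|) / M).
*)
theory Submission
  imports Defs "HOL-Computational_Algebra.Polynomial"
begin

section \<open>Real powers of a matrix from a spectral decomposition\<close>

primrec mat_pow :: "'i set \<Rightarrow> ('i \<Rightarrow> 'i \<Rightarrow> real) \<Rightarrow> nat \<Rightarrow> 'i \<Rightarrow> 'i \<Rightarrow> real" where
  "mat_pow I A 0 i j = (if i = j then 1 else 0)"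
| "mat_pow I A (Suc k) i j = (\<Sum>z\<in>I. A i z * mat_pow I A k z j)"

lemma mat_pow_Suc_spectral:
  assumes fin: "finite I"
    and orth: "\<forall>i\<in>I. \<forall>j\<in>I. (\<Sum>l\<in>I. U l i * U l j) = (if i = j then 1 else 0)"
    and dec: "\<forall>i\<in>I. \<forall>j\<in>I. A i j = (\<Sum>l\<in>I. U i l * d l * U j l)"
    and "i \<in> I" "j \<in> I"
  shows "mat_pow I A (Suc k) i j = (\<Sum>l\<in>I. U i l * d l ^ Suc k * U j l)"
  using assms(4,5)
proof (induction k arbitrary: i j)
  case 0
  have "mat_pow I A 1 i j = (\<Sum>z\<in>I. if z = j then A i z else 0)"
    by (simp add: if_distrib cong: if_cong)
  with 0 fin dec show ?case by simp
next
  case (Suc k)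
  have "mat_pow I A (Suc (Suc k)) i j =
      (\<Sum>z\<in>I. (\<Sum>l\<in>I. U i l * d l * U z l) * (\<Sum>l'\<in>I. U z l' * d l' ^ Suc k * U j l'))"
    using Suc dec by (auto intro!: sum.cong)
  also have "\<dots> = (\<Sum>l\<in>I. \<Sum>l'\<in>I. (U i l * d l) * (\<Sum>z\<in>I. U z l * U z l') * (d l' ^ Suc k * U j l'))"
  proof -
    have "(\<Sum>z\<in>I. (\<Sum>l\<in>I. U i l * d l * U z l) * (\<Sum>l'\<in>I. U z l' * d l' ^ Suc k * U j l')) =
        (\<Sum>z\<in>I. \<Sum>l\<in>I. \<Sum>l'\<in>I. (U i l * d l) * (U z l * U z l') * (d l' ^ Suc k * U j l'))"
      by (simp add: sum_product mult_ac)
    also have "\<dots> = (\<Sum>l\<in>I. \<Sum>l'\<in>I. \<Sum>z\<in>I. (U i l * d l) * (U z l * U z l') * (d l' ^ Suc k * U j l'))"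
      by (subst sum.swap, rule sum.cong, simp, rule sum.swap)
    finally show ?thesis
      by (simp add: sum_distrib_left sum_distrib_right)
  qed
  also have "\<dots> = (\<Sum>l\<in>I. \<Sum>l'\<in>I. if l = l' then U i l * d l * (d l' ^ Suc k * U j l') else 0)"
    using orth by (intro sum.cong refl) auto
  also have "\<dots> = (\<Sum>l\<in>I. U i l * d l ^ Suc (Suc k) * U j l)"
    using fin by (simp add: mult_ac)
  finally show ?case .
qed

text \<open>Requiring \<open>p(0) = 0\<close> avoids the identity matrix \<open>A\<^sup>0\<close>: the spectral form of
  \<open>A\<^sup>0\<close> would need \<open>U U\<^sup>T = 1\<close>, whereas only \<open>U\<^sup>T U = 1\<close> is assumed.\<close>
lemma poly_interpolation_vanishing_at_0:
  fixes f :: "real \<Rightarrow> real"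
  assumes "finite S" "0 \<notin> S"
  shows "\<exists>p. poly p 0 = 0 \<and> (\<forall>s\<in>S. poly p s = f s)"
  using assms
proof (induction S rule: finite_induct)
  case empty
  show ?case by (intro exI[of _ 0]) simp
next
  case (insert t S)
  then obtain p where p: "poly p 0 = 0" "\<forall>s\<in>S. poly p s = f s" by auto
  define w where "w = [:0, 1:] * (\<Prod>s\<in>S. [:- s, 1:])"
  have w: "poly w x = x * (\<Prod>s\<in>S. x - s)" for x
    by (simp add: w_def poly_prod)
  have "poly w t \<noteq> 0" using insert by (simp add: w)
  then show ?case using p insert
    by (intro exI[of _ "p + smult ((f t - poly p t) / poly w t) w"]) (auto simp: w)
qed

lemma spectral_poly_eq_mat_pow_sum:
  fixes p :: "real poly"
  assumes fin: "finite I"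
    and orth: "\<forall>i\<in>I. \<forall>j\<in>I. (\<Sum>l\<in>I. U l i * U l j) = (if i = j then 1 else 0)"
    and dec: "\<forall>i\<in>I. \<forall>j\<in>I. A i j = (\<Sum>l\<in>I. U i l * d l * U j l)"
    and p0: "poly p 0 = 0" and ij: "i \<in> I" "j \<in> I"
  shows "(\<Sum>l\<in>I. U i l * poly p (d l) * U j l) = (\<Sum>k<degree p. coeff p (Suc k) * mat_pow I A (Suc k) i j)"
proof -
  have p: "poly p x = (\<Sum>k<degree p. coeff p (Suc k) * x ^ Suc k)" for x
  proof -
    have "poly p x = (\<Sum>i<Suc (degree p). coeff p i * x ^ i)"
      by (simp add: poly_altdef lessThan_Suc_atMost)
    also have "\<dots> = (\<Sum>k<degree p. coeff p (Suc k) * x ^ Suc k)"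
      using p0 by (subst sum.lessThan_Suc_shift) (simp add: poly_0_coeff_0)
    finally show ?thesis .
  qed
  have "(\<Sum>l\<in>I. U i l * poly p (d l) * U j l) =
      (\<Sum>l\<in>I. \<Sum>k<degree p. coeff p (Suc k) * (U i l * d l ^ Suc k * U j l))"
    by (simp add: p sum_distrib_left sum_distrib_right mult_ac)
  also have "\<dots> = (\<Sum>k<degree p. coeff p (Suc k) * (\<Sum>l\<in>I. U i l * d l ^ Suc k * U j l))"
    by (subst sum.swap) (simp add: sum_distrib_left)
  also have "\<dots> = (\<Sum>k<degree p. coeff p (Suc k) * mat_pow I A (Suc k) i j)"
    using mat_pow_Suc_spectral[OF fin orth dec ij] by simp
  finally show ?thesis .
qed

lemma spectral_rpow_unique:
  fixes U V :: "'i \<Rightarrow> 'i \<Rightarrow> real" and d e :: "'i \<Rightarrow> real"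
  assumes fin: "finite I"
    and orthU: "\<forall>i\<in>I. \<forall>j\<in>I. (\<Sum>l\<in>I. U l i * U l j) = (if i = j then 1 else 0)"
    and posd: "\<forall>l\<in>I. d l > 0"
    and decU: "\<forall>i\<in>I. \<forall>j\<in>I. A i j = (\<Sum>l\<in>I. U i l * d l * U j l)"
    and orthV: "\<forall>i\<in>I. \<forall>j\<in>I. (\<Sum>l\<in>I. V l i * V l j) = (if i = j then 1 else 0)"
    and pose: "\<forall>l\<in>I. e l > 0"
    and decV: "\<forall>i\<in>I. \<forall>j\<in>I. A i j = (\<Sum>l\<in>I. V i l * e l * V j l)"
    and ij: "i \<in> I" "j \<in> I"
  shows "(\<Sum>l\<in>I. V i l * e l powr a * V j l) = (\<Sum>l\<in>I. U i l * d l powr a * U j l)"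
proof -
  obtain p where p0: "poly p 0 = 0" and p: "\<forall>s\<in>d ` I \<union> e ` I. poly p s = s powr a"
    using poly_interpolation_vanishing_at_0[of "d ` I \<union> e ` I" "\<lambda>s. s powr a"] fin posd pose
    by fastforce
  have "(\<Sum>l\<in>I. V i l * e l powr a * V j l) = (\<Sum>l\<in>I. V i l * poly p (e l) * V j l)"
    using p by simp
  also have "\<dots> = (\<Sum>l\<in>I. U i l * poly p (d l) * U j l)"
    unfolding spectral_poly_eq_mat_pow_sum[OF fin orthV decV p0 ij]
      spectral_poly_eq_mat_pow_sum[OF fin orthU decU p0 ij] ..
  also have "\<dots> = (\<Sum>l\<in>I. U i l * d l powr a * U j l)"
    using p by simp
  finally show ?thesis .
qed

lemma mat_rpow_spectral:
  fixes U :: "'i \<Rightarrow> 'i \<Rightarrow> real" and d :: "'i \<Rightarrow> real"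
  assumes fin: "finite I"
    and orth: "\<forall>i\<in>I. \<forall>j\<in>I. (\<Sum>l\<in>I. U l i * U l j) = (if i = j then 1 else 0)"
    and pos: "\<forall>l\<in>I. d l > 0"
    and dec: "\<forall>i\<in>I. \<forall>j\<in>I. A i j = (\<Sum>l\<in>I. U i l * d l * U j l)"
    and ij: "i \<in> I" "j \<in> I"
  shows "mat_rpow I A a i j = (\<Sum>l\<in>I. U i l * d l powr a * U j l)"
proof -
  define spectral where "spectral B \<longleftrightarrow> (\<exists>U d.
      (\<forall>i\<in>I. \<forall>j\<in>I. (\<Sum>l\<in>I. U l i * U l j) = (if i = j then 1 else 0)) \<and>
      (\<forall>l\<in>I. d l > (0::real)) \<and>
      (\<forall>i\<in>I. \<forall>j\<in>I. A i j = (\<Sum>l\<in>I. U i l * d l * U j l)) \<and>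
      (\<forall>i j. B i j = (if i \<in> I \<and> j \<in> I then (\<Sum>l\<in>I. U i l * d l powr a * U j l) else 0)))"
    for B
  have "spectral (\<lambda>i j. if i \<in> I \<and> j \<in> I then (\<Sum>l\<in>I. U i l * d l powr a * U j l) else 0)"
    unfolding spectral_def using orth pos dec by blast
  then have "spectral (mat_rpow I A a)"
    unfolding mat_rpow_def spectral_def[symmetric] by (rule someI[of spectral])
  then obtain V e where
      orthV: "\<forall>i\<in>I. \<forall>j\<in>I. (\<Sum>l\<in>I. V l i * V l j) = (if i = j then 1 else 0)"
      and posV: "\<forall>l\<in>I. e l > 0"
      and decV: "\<forall>i\<in>I. \<forall>j\<in>I. A i j = (\<Sum>l\<in>I. V i l * e l * V j l)"
      and rpow: "mat_rpow I A a i j = (\<Sum>l\<in>I. V i l * e l powr a * V j l)"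
    unfolding spectral_def using ij by auto
  with spectral_rpow_unique[OF fin orth pos dec orthV posV decV ij] show ?thesis
    by simp
qed

section \<open>The sine basis of the Dirichlet Laplacian\<close>

lemma sum_cos_multiples:
  fixes M :: nat and r :: int
  assumes M: "M > 0" and r: "\<bar>r\<bar> < 2 * int M"
  shows "(\<Sum>l<M. cos (r * (pi * l / M))) = (if r = 0 then real M else if even r then 0 else 1)"
proof (cases "r = 0")
  case False
  define t where "t = r * pi / M"
  have "sin (t / 2) \<noteq> 0"
  proof
    assume "sin (t / 2) = 0"
    then obtain i :: int where "t / 2 = i * pi"
      by (auto simp: sin_zero_iff_int2)
    then have "real_of_int r = real_of_int (2 * int M * i)"
      using M by (simp add: t_def field_simps)
    then have "r = 2 * int M * i"
      by (simp only: of_int_eq_iff)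
    with r False show False
      by (cases "i = 0") (auto simp: abs_mult)
  qed
  define F where "F l = sin ((real l - 1/2) * t)" for l :: nat
  have telescope: "F (Suc l) - F l = 2 * sin (t / 2) * cos (l * t)" for l
    by (simp add: F_def algebra_simps sin_add sin_diff)
  have "2 * sin (t / 2) * (\<Sum>l<M. cos (l * t)) = (\<Sum>l<M. F (Suc l) - F l)"
    by (simp add: telescope sum_distrib_left)
  also have "\<dots> = F M - F 0"
    by (rule sum_lessThan_telescope)
  also have "F M = sin (pi * r - t / 2)"
    using M by (simp add: F_def t_def field_simps)
  finally have "2 * sin (t / 2) * (\<Sum>l<M. cos (l * t)) = (if even r then 0 else 2 * sin (t / 2))"
    by (simp add: F_def sin_diff)
  with \<open>sin (t / 2) \<noteq> 0\<close> have "(\<Sum>l<M. cos (l * t)) = (if even r then 0 else 1)"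
    by (auto split: if_splits)
  with False show ?thesis
    by (simp add: t_def mult_ac)
qed simp

lemma sum_cos_multiples_from_1:
  fixes M :: nat and r :: int
  assumes M: "M > 0" and r: "\<bar>r\<bar> < 2 * int M"
  shows "(\<Sum>l\<in>{1..<M}. cos (r * (pi * l / M))) = (if r = 0 then real M - 1 else if even r then -1 else 0)"
proof -
  have "{..<M} = insert 0 {1..<M}"
    using M by auto
  with sum_cos_multiples[OF assms] show ?thesis
    by (auto split: if_splits)
qed

lemma sine_modes_orthogonal:
  fixes M p q :: nat
  assumes M: "M > 0" and p: "p \<in> {1..<M}" and q: "q \<in> {1..<M}"
  shows "(\<Sum>l\<in>{1..<M}. sin (p * (pi * l / M)) * sin (q * (pi * l / M))) = (if p = q then M / 2 else 0)"
proof -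
  let ?S = "\<lambda>r::int. \<Sum>l\<in>{1..<M}. cos (r * (pi * l / M))"
  have "sin (p * x) * sin (q * x) = (cos ((int p - int q) * x) - cos ((int p + int q) * x)) / 2"
    for x :: real
    by (simp add: cos_diff cos_add algebra_simps)
  then have "(\<Sum>l\<in>{1..<M}. sin (p * (pi * l / M)) * sin (q * (pi * l / M))) =
      (?S (int p - int q) - ?S (int p + int q)) / 2"
    by (simp only:) (simp add: sum_subtractf flip: sum_divide_distrib)
  also have "\<dots> = (if p = q then M / 2 else 0)"
  proof -
    have "\<bar>int p - int q\<bar> < 2 * int M" "\<bar>int p + int q\<bar> < 2 * int M"
      using p q by auto
    note S = this[THEN sum_cos_multiples_from_1[OF M]]
    show ?thesis
      unfolding S using p q by auto
  qed
  finally show ?thesis .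
qed

lemma sine_modes_diagonalize_laplacian:
  fixes M p q :: nat
  assumes M: "M > 0" and p: "p \<in> {1..<M}" and q: "q \<in> {1..<M}"
  shows "(\<Sum>l\<in>{1..<M}. sin (p * (pi * l / M)) * sin (q * (pi * l / M)) * (2 - 2 * cos (pi * l / M)))
         = M / 2 * (if p = q then 2 else if \<bar>int p - int q\<bar> = 1 then -1 else 0)"
proof -
  let ?S = "\<lambda>r::int. \<Sum>l\<in>{1..<M}. cos (r * (pi * l / M))"
  have "sin (p * x) * sin (q * x) * (2 - 2 * cos x) =
      cos ((int p - int q) * x) - cos ((int p + int q) * x)
      - (cos ((int p - int q + 1) * x) + cos ((int p - int q - 1) * x)) / 2
      + (cos ((int p + int q + 1) * x) + cos ((int p + int q - 1) * x)) / 2" for x :: real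
    by (simp add: cos_diff cos_add sin_add sin_diff field_simps)
  then have "(\<Sum>l\<in>{1..<M}. sin (p * (pi * l / M)) * sin (q * (pi * l / M)) * (2 - 2 * cos (pi * l / M)))
      = ?S (int p - int q) - ?S (int p + int q) - (?S (int p - int q + 1) + ?S (int p - int q - 1)) / 2
        + (?S (int p + int q + 1) + ?S (int p + int q - 1)) / 2"
    by (simp only:) (simp add: sum_subtractf sum.distrib flip: sum_divide_distrib)
  also have "\<dots> = M / 2 * (if p = q then 2 else if \<bar>int p - int q\<bar> = 1 then -1 else 0)"
  proof -
    have "\<bar>int p - int q\<bar> < 2 * int M" "\<bar>int p + int q\<bar> < 2 * int M"
      "\<bar>int p - int q + 1\<bar> < 2 * int M" "\<bar>int p - int q - 1\<bar> < 2 * int M"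
      "\<bar>int p + int q + 1\<bar> < 2 * int M" "\<bar>int p + int q - 1\<bar> < 2 * int M"
      using p q by auto
    note S = this[THEN sum_cos_multiples_from_1[OF M]]
    show ?thesis
      unfolding S using p q by (auto simp: even_add even_diff field_simps) presburger+
  qed
  finally show ?thesis .
qed

text \<open>The mode label \<open>l \<in> {-m..m}\<close> stands for the frequency \<open>l + m + 1 \<in> {1..<2 * m + 2}\<close>.\<close>
definition dirichlet_mode :: "nat \<Rightarrow> int \<Rightarrow> int \<Rightarrow> real" where
  "dirichlet_mode m x l = sqrt (2 / real (2 * m + 2)) *
     sin (real_of_int (x + int m + 1) * (pi * real_of_int (l + int m + 1) / real (2 * m + 2)))"

definition dirichlet_eigenvalue :: "nat \<Rightarrow> int \<Rightarrow> real" where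
  "dirichlet_eigenvalue m l = 2 - 2 * cos (pi * real_of_int (l + int m + 1) / real (2 * m + 2))"

lemma sqrt_mult_self_left: "0 \<le> c \<Longrightarrow> sqrt c * (sqrt c * x) = c * (x::real)"
  by (simp add: mult.assoc[symmetric])

lemma sum_centered_interval_shift:
  assumes "M = 2 * m + 2"
  shows "(\<Sum>l\<in>{-int m..int m}. F (l + int m + 1)) = (\<Sum>l\<in>{1..<M}. F (int l))"
  by (rule sum.reindex_bij_witness[of _ "\<lambda>l. int l - int m - 1" "\<lambda>l. nat (l + int m + 1)"])
    (use assms in auto)

lemma dirichlet_modes_orthonormal:
  assumes i: "i \<in> {-int m..int m}" and j: "j \<in> {-int m..int m}"
  shows "(\<Sum>l\<in>{-int m..int m}. dirichlet_mode m l i * dirichlet_mode m l j) = (if i = j then 1 else 0)"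
proof -
  define M where "M = 2 * m + 2"
  define p where "p = nat (i + int m + 1)"
  define q where "q = nat (j + int m + 1)"
  have pq: "real_of_int (i + int m + 1) = p" "real_of_int (j + int m + 1) = q"
      "p \<in> {1..<M}" "q \<in> {1..<M}"
    using i j by (auto simp: p_def q_def M_def)
  have M: "M > 0"
    by (simp add: M_def)
  have "(\<Sum>l\<in>{-int m..int m}. dirichlet_mode m l i * dirichlet_mode m l j) =
      (\<Sum>l\<in>{-int m..int m}. (\<lambda>t. 2 / M * (sin (p * (pi * real_of_int t / M)) *
          sin (q * (pi * real_of_int t / M)))) (l + int m + 1))"
    unfolding dirichlet_mode_def pq(1,2) M_def
    by (intro sum.cong refl) (simp add: mult_ac sqrt_mult_self_left)
  also have "\<dots> = 2 / M * (\<Sum>l\<in>{1..<M}. sin (p * (pi * l / M)) * sin (q * (pi * l / M)))"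
    by (subst sum_centered_interval_shift[OF M_def]) (simp add: sum_distrib_left)
  also have "\<dots> = (if i = j then 1 else 0)"
    unfolding sine_modes_orthogonal[OF M pq(3,4)] using i j by (auto simp: p_def q_def M_def)
  finally show ?thesis .
qed

lemma hbar_dirichlet_spectral:
  assumes i: "i \<in> {-int m..int m}" and j: "j \<in> {-int m..int m}"
  shows "hbar i j = (\<Sum>l\<in>{-int m..int m}. dirichlet_mode m i l * dirichlet_eigenvalue m l * dirichlet_mode m j l)"
proof -
  define M where "M = 2 * m + 2"
  define p where "p = nat (i + int m + 1)"
  define q where "q = nat (j + int m + 1)"
  have pq: "real_of_int (i + int m + 1) = p" "real_of_int (j + int m + 1) = q"
      "p \<in> {1..<M}" "q \<in> {1..<M}"
    using i j by (auto simp: p_def q_def M_def)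
  have M: "M > 0"
    by (simp add: M_def)
  have "(\<Sum>l\<in>{-int m..int m}. dirichlet_mode m i l * dirichlet_eigenvalue m l * dirichlet_mode m j l) =
      (\<Sum>l\<in>{-int m..int m}. (\<lambda>t. 2 / M * (sin (p * (pi * real_of_int t / M)) *
          sin (q * (pi * real_of_int t / M)) * (2 - 2 * cos (pi * real_of_int t / M)))) (l + int m + 1))"
    unfolding dirichlet_mode_def dirichlet_eigenvalue_def pq(1,2) M_def
    by (intro sum.cong refl) (simp add: mult_ac sqrt_mult_self_left)
  also have "\<dots> = 2 / M * (\<Sum>l\<in>{1..<M}. sin (p * (pi * l / M)) * sin (q * (pi * l / M)) *
      (2 - 2 * cos (pi * l / M)))"
    by (subst sum_centered_interval_shift[OF M_def]) (simp add: sum_distrib_left)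
  also have "\<dots> = hbar i j"
    unfolding sine_modes_diagonalize_laplacian[OF M pq(3,4)] using i j
    by (auto simp: p_def q_def M_def hbar_def)
  finally show ?thesis ..
qed

lemma dirichlet_eigenvalue_pos:
  assumes "l \<in> {-int m..int m}"
  shows "dirichlet_eigenvalue m l > 0"
proof -
  define t where "t = pi * real_of_int (l + int m + 1) / real (2 * m + 2)"
  have "real_of_int (l + int m + 1) / real (2 * m + 2) < 1"
    using assms by (auto simp: field_simps)
  then have "t < pi"
    unfolding t_def using pi_gt_zero
    by (metis mult.right_neutral mult_strict_left_mono times_divide_eq_right)
  moreover have "0 < t"
    using assms by (auto simp: t_def)
  ultimately have "cos t < cos 0"
    by (intro cos_monotone_0_pi) auto
  then show ?thesis
    by (simp add: dirichlet_eigenvalue_def t_def)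
qed

lemma mat_rpow_hbar:
  assumes "i \<in> {-int m..int m}" "j \<in> {-int m..int m}"
  shows "mat_rpow {-int m..int m} hbar a i j =
    (\<Sum>l\<in>{-int m..int m}. dirichlet_mode m i l * dirichlet_eigenvalue m l powr a * dirichlet_mode m j l)"
  using assms dirichlet_modes_orthonormal dirichlet_eigenvalue_pos hbar_dirichlet_spectral
  by (intro mat_rpow_spectral) auto

section \<open>The symbol of the fractional Laplacian\<close>

definition lap_symbol :: "real \<Rightarrow> real \<Rightarrow> real" where
  "lap_symbol a t = 4 powr a * sin (pi * t / 2) powr (2 * a)"

lemma sin_ge_third:
  fixes x :: real
  assumes "0 \<le> x" "x \<le> 2"
  shows "x / 3 \<le> sin x"
proof -
  have "\<bar>sin x - (\<Sum>m<3. sin_coeff m * x ^ m)\<bar> \<le> inverse (fact 3) * \<bar>x\<bar> ^ 3"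
    by (rule Maclaurin_sin_bound)
  moreover have "(\<Sum>m<3. sin_coeff m * x ^ m) = x"
    by (simp add: numeral_3_eq_3 sin_coeff_def)
  moreover have "x ^ 3 \<le> x * 4"
  proof -
    have "x\<^sup>2 \<le> 2\<^sup>2"
      using assms by (intro power_mono) auto
    then have "x * (x * x) \<le> x * 4"
      using assms by (intro mult_left_mono) (auto simp: power2_eq_square)
    then show ?thesis
      by (simp add: power3_eq_cube mult.assoc)
  qed
  ultimately show ?thesis
    using assms by (simp add: fact_numeral abs_if split: if_splits)
qed

lemma sin_half_pi_ge:
  assumes "0 \<le> t" "t \<le> 1"
  shows "t / 3 \<le> sin (pi * t / 2)"
proof -
  have "pi * t \<le> pi"
    using assms by (simp add: mult_left_le)
  then have "pi * t / 2 \<le> 2"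
    using pi_less_4 by linarith
  then have "pi * t / 2 / 3 \<le> sin (pi * t / 2)"
    using assms by (intro sin_ge_third) auto
  moreover have "t * 1 \<le> t * (pi / 2)"
    using assms pi_ge_two by (intro mult_left_mono) auto
  ultimately show ?thesis
    by (simp add: mult.commute)
qed

lemma sin_half_pi_mono:
  assumes "0 \<le> u" "u \<le> v" "v \<le> 1"
  shows "sin (pi * u / 2) \<le> sin (pi * v / 2)"
proof -
  have "0 \<le> pi * u" "pi * u \<le> pi * v" "pi * v \<le> pi"
    using assms by (auto simp: mult_left_le intro: mult_left_mono)
  then show ?thesis
    using pi_gt_zero by (intro sin_monotone_2pi_le; linarith)
qed

text \<open>For \<open>t = 0\<close> both sides are \<open>0\<close>, since \<open>0 powr x = 0\<close>.\<close>
lemma sin_half_pi_powr_le: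
  assumes "0 \<le> t" "t \<le> 1"
  shows "sin (pi * t / 2) powr (2 * a) \<le> 3 powr max 0 (- 2 * a) * t powr - max 0 (- 2 * a)"
proof (cases "t = 0")
  case False
  show ?thesis
  proof (cases "0 \<le> a")
    case True
    have "sin (pi * t / 2) powr (2 * a) \<le> 1"
      using True sin_half_pi_ge[OF assms] assms by (intro powr_le1) auto
    also have "1 = 3 powr max 0 (- 2 * a) * t powr - max 0 (- 2 * a)"
      using True False by simp
    finally show ?thesis .
  next
    case neg: False
    have "sin (pi * t / 2) powr (2 * a) \<le> (t / 3) powr (2 * a)"
      using assms neg False by (intro powr_mono2' sin_half_pi_ge) auto
    also have "\<dots> = t powr (2 * a) / 3 powr (2 * a)"
      using assms by (simp add: powr_divide)
    also have "\<dots> = 3 powr - (2 * a) * t powr - (- (2 * a))"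
      by (simp only: powr_minus divide_inverse mult.commute minus_minus)
    also have "- (2 * a) = max 0 (- 2 * a)"
      using neg by simp
    finally show ?thesis .
  qed
qed simp

lemma absolutely_integrable_bounded_by_powr:
  fixes f :: "real \<Rightarrow> real"
  assumes f: "f \<in> borel_measurable borel" and B: "0 \<le> B" and b: "b < 1"
    and bound: "\<And>t. t \<in> {0..B} \<Longrightarrow> \<bar>f t\<bar> \<le> c * t powr - b"
  shows "f absolutely_integrable_on {0..B}"
proof (rule measurable_bounded_by_integrable_imp_absolutely_integrable)
  show "f \<in> borel_measurable (lebesgue_on {0..B})"
    using measurable_comp[OF id_borel_measurable_lebesgue_on f] by (simp add: comp_def)
  have "(\<lambda>t. t powr - b) integrable_on {0..B}"
    using has_integral_powr_from_0[of "- b" B] B b unfolding integrable_on_def by auto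
  then show "(\<lambda>t. c * t powr - b) integrable_on {0..B}"
    by (rule integrable_on_mult_right)
qed (use bound in auto)

lemma sin_half_pi_powr_cos_absolutely_integrable:
  assumes a: "a > -1/2"
  shows "(\<lambda>t. sin (pi * t / 2) powr (2 * a) * cos (w * t)) absolutely_integrable_on {0..1}"
proof (rule absolutely_integrable_bounded_by_powr)
  fix t :: real assume t: "t \<in> {0..1}"
  have "\<bar>sin (pi * t / 2) powr (2 * a) * cos (w * t)\<bar> \<le> sin (pi * t / 2) powr (2 * a)"
    by (simp add: abs_mult mult_left_le)
  also have "\<dots> \<le> 3 powr max 0 (- 2 * a) * t powr - max 0 (- 2 * a)"
    using t by (intro sin_half_pi_powr_le) auto
  finally show "\<bar>sin (pi * t / 2) powr (2 * a) * cos (w * t)\<bar> \<le> \<dots>" .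
qed (use a in auto)

lemma lap_symbol_nonneg: "0 \<le> lap_symbol a t"
  by (simp add: lap_symbol_def)

lemma lap_symbol_one: "lap_symbol a 1 = 4 powr a"
  by (simp add: lap_symbol_def)

lemma lap_symbol_eigenvalue:
  assumes "0 < t" "t \<le> 1"
  shows "(2 - 2 * cos (pi * t)) powr a = lap_symbol a t"
proof -
  define s where "s = sin (pi * t / 2)"
  have "0 < s"
    using sin_half_pi_ge[of t] assms by (simp add: s_def)
  have "cos (pi * t) = 1 - 2 * s\<^sup>2"
    using cos_double_sin[of "pi * t / 2"] by (simp add: s_def)
  then have "(2 - 2 * cos (pi * t)) powr a = 4 powr a * (s powr 2) powr a"
    using \<open>0 < s\<close> by (simp add: powr_mult)
  also have "\<dots> = lap_symbol a t"
    by (simp add: powr_powr lap_symbol_def s_def mult.commute)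
  finally show ?thesis .
qed

lemma lap_symbol_monotone:
  "mono_on {0<..1} (lap_symbol a) \<or> antimono_on {0<..1} (lap_symbol a)"
proof (cases "0 \<le> a")
  case True
  have "lap_symbol a u \<le> lap_symbol a v" if "u \<in> {0<..1}" "v \<in> {0<..1}" "u \<le> v" for u v
  proof -
    have "sin (pi * u / 2) powr (2 * a) \<le> sin (pi * v / 2) powr (2 * a)"
      using that True sin_half_pi_ge[of u] by (intro powr_mono2 sin_half_pi_mono) auto
    then show ?thesis
      by (simp add: lap_symbol_def)
  qed
  then show ?thesis
    by (intro disjI1 monotone_onI)
next
  case False
  have "lap_symbol a v \<le> lap_symbol a u" if "u \<in> {0<..1}" "v \<in> {0<..1}" "u \<le> v" for u v
  proof -
    have "sin (pi * v / 2) powr (2 * a) \<le> sin (pi * u / 2) powr (2 * a)"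
      using that False sin_half_pi_ge[of u] by (intro powr_mono2' sin_half_pi_mono) auto
    then show ?thesis
      by (simp add: lap_symbol_def)
  qed
  then show ?thesis
    by (intro disjI2 monotone_onI)
qed

lemma lap_symbol_le_powr:
  assumes "0 \<le> t" "t \<le> 1"
  shows "lap_symbol a t \<le> 4 powr a * 3 powr max 0 (- 2 * a) * t powr - max 0 (- 2 * a)"
  using sin_half_pi_powr_le[OF assms, of a] by (simp add: lap_symbol_def mult.assoc)

lemma lap_symbol_cos_integrable:
  assumes "a > -1/2"
  shows "(\<lambda>t. lap_symbol a t * cos (w * t)) integrable_on {0..1}"
  using integrable_on_mult_right[OF set_lebesgue_integral_eq_integral(1)[OF
      sin_half_pi_powr_cos_absolutely_integrable[OF assms]], of "4 powr a"]
  by (simp add: lap_symbol_def mult.assoc)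

lemma lap_symbol_integrable:
  "a > -1/2 \<Longrightarrow> lap_symbol a integrable_on {0..1}"
  using lap_symbol_cos_integrable[of a 0] by simp

lemma hZ_eq_integral:
  assumes a: "a > -1/2"
  shows "hZ a j k = integral {0..1} (\<lambda>t. lap_symbol a t * cos (real_of_int (j - k) * pi * t))"
proof -
  define F where "F t = sin (pi * t / 2) powr (2 * a) * cos (real_of_int \<bar>j - k\<bar> * pi * t)" for t
  have "F absolutely_integrable_on {0..1}"
    unfolding F_def by (rule sin_half_pi_powr_cos_absolutely_integrable[OF a])
  then have "set_integrable lborel {0..1} F"
    unfolding set_integrable_def by (subst (asm) integrable_completion) (simp_all add: F_def)
  then have "(LBINT x=ereal 0..ereal 1. F x) = integral {0..1} F"
    by (intro interval_integral_eq_integral) auto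
  then have "hZ a j k = 4 powr a * integral {0..1} F"
    by (simp only: hZ_def F_def zero_ereal_def one_ereal_def)
  also have "\<dots> = integral {0..1} (\<lambda>t. lap_symbol a t * cos (real_of_int \<bar>j - k\<bar> * pi * t))"
    unfolding lap_symbol_def F_def mult.assoc integral_mult_right ..
  also have "\<dots> = integral {0..1} (\<lambda>t. lap_symbol a t * cos (real_of_int (j - k) * pi * t))"
  proof -
    have "cos (real_of_int \<bar>r\<bar> * pi * t) = cos (real_of_int r * pi * t)" for r :: int and t
      by (cases "0 \<le> r") (simp_all add: abs_if)
    then show ?thesis
      by (simp only:)
  qed
  finally show ?thesis .
qed

section \<open>Riemann sums and alternating sums of monotone weights\<close>

lemma abs_cos_diff_le: "\<bar>cos x - cos y\<bar> \<le> \<bar>x - y :: real\<bar>"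
proof -
  have "\<bar>cos x - cos y\<bar> = 2 * \<bar>sin ((x + y) / 2)\<bar> * \<bar>sin ((y - x) / 2)\<bar>"
    by (simp add: cos_diff_cos abs_mult)
  also have "\<dots> \<le> 2 * 1 * \<bar>(y - x) / 2\<bar>"
    by (intro mult_mono abs_sin_x_le_abs_x) auto
  finally show ?thesis
    by simp
qed

lemma monotone_on_between:
  fixes g :: "real \<Rightarrow> real"
  assumes "mono_on S g \<or> antimono_on S g" "u \<in> S" "t \<in> S" "v \<in> S" "u \<le> t" "t \<le> v"
  shows "min (g u) (g v) \<le> g t \<and> g t \<le> max (g u) (g v)"
  using assms(1)
proof
  assume "mono_on S g"
  then have "g u \<le> g t" "g t \<le> g v"
    using assms(2-) by (auto dest: monotone_onD)
  then show ?thesis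
    by linarith
next
  assume "antimono_on S g"
  then have "g t \<le> g u" "g v \<le> g t"
    using assms(2-) by (auto dest: monotone_onD)
  then show ?thesis
    by linarith
qed

lemma monotone_abs_diff_le:
  fixes g :: "real \<Rightarrow> real"
  assumes "mono_on S g \<or> antimono_on S g" "u \<in> S" "t \<in> S" "v \<in> S" "u \<le> t" "t \<le> v"
  shows "\<bar>g t - g v\<bar> \<le> \<bar>g u - g v\<bar>"
  using monotone_on_between[OF assms] by linarith

lemma grid_point_in_unit_interval:
  fixes M l :: nat
  shows "M > 0 \<Longrightarrow> l \<in> {1..M} \<Longrightarrow> l / M \<in> {0<..1}"
  by auto

lemma sum_grid_variation_monotone:
  fixes g :: "real \<Rightarrow> real" and M :: nat
  assumes M: "M > 0" and mono: "mono_on {0<..1} g \<or> antimono_on {0<..1} g"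
  shows "(\<Sum>l\<in>{1..<M}. \<bar>g (l / M) - g (Suc l / M)\<bar>) = \<bar>g (1 / M) - g 1\<bar>"
proof -
  define s where "s l = g (l / M)" for l :: nat
  note grid = grid_point_in_unit_interval[OF M]
  have "(\<Sum>l\<in>{1..<M}. \<bar>s l - s (Suc l)\<bar>) = \<bar>s 1 - s M\<bar>"
    using mono
  proof
    assume g: "mono_on {0<..1} g"
    have le: "s l \<le> s l'" if "l \<in> {1..M}" "l' \<in> {1..M}" "l \<le> l'" for l l'
      unfolding s_def using that(3) M
      by (intro monotone_onD[OF g grid[OF that(1)] grid[OF that(2)]]) (simp add: divide_right_mono)
    then have "(\<Sum>l\<in>{1..<M}. \<bar>s l - s (Suc l)\<bar>) = (\<Sum>l\<in>{1..<M}. s (Suc l) - s l)"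
      by (intro sum.cong) auto
    also have "\<dots> = s M - s 1"
      using M by (intro sum_Suc_diff') auto
    finally show ?thesis
      using le[of 1 M] M by simp
  next
    assume g: "antimono_on {0<..1} g"
    have le: "s l' \<le> s l" if "l \<in> {1..M}" "l' \<in> {1..M}" "l \<le> l'" for l l'
      unfolding s_def using that(3) M
      by (intro monotone_onD[OF g grid[OF that(1)] grid[OF that(2)]]) (simp add: divide_right_mono)
    then have "(\<Sum>l\<in>{1..<M}. \<bar>s l - s (Suc l)\<bar>) = - (\<Sum>l\<in>{1..<M}. s (Suc l) - s l)"
      by (simp add: sum_negf[symmetric])
    also have "\<dots> = s 1 - s M"
      using M by (subst sum_Suc_diff') auto
    finally show ?thesis
      using le[of 1 M] M by simp
  qed
  then show ?thesis
    using M by (simp add: s_def)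
qed

lemma monotone_cos_oscillation:
  fixes g :: "real \<Rightarrow> real"
  assumes mono: "mono_on S g \<or> antimono_on S g" and "u \<in> S" "t \<in> S" "v \<in> S" "u \<le> t" "t \<le> v"
    and "0 \<le> g v"
  shows "\<bar>g t * cos (w * t) - g v * cos (w * v)\<bar> \<le> \<bar>g u - g v\<bar> + g v * \<bar>w\<bar> * (v - t)"
proof -
  have "\<bar>(g t - g v) * cos (w * t)\<bar> \<le> \<bar>g t - g v\<bar>"
    by (simp add: abs_mult mult_left_le)
  also have "\<dots> \<le> \<bar>g u - g v\<bar>"
    by (rule monotone_abs_diff_le[OF assms(1-6)])
  finally have "\<bar>(g t - g v) * cos (w * t)\<bar> \<le> \<bar>g u - g v\<bar>" .
  moreover have "\<bar>g v * (cos (w * t) - cos (w * v))\<bar> \<le> g v * (\<bar>w\<bar> * (v - t))"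
  proof -
    have "\<bar>cos (w * t) - cos (w * v)\<bar> \<le> \<bar>w\<bar> * (v - t)"
      using abs_cos_diff_le[of "w * t" "w * v"] \<open>t \<le> v\<close>
      by (simp add: abs_mult flip: right_diff_distrib)
    then show ?thesis
      using \<open>0 \<le> g v\<close> by (simp add: abs_mult mult_left_mono)
  qed
  moreover have "g t * cos (w * t) - g v * cos (w * v) = (g t - g v) * cos (w * t) + g v * (cos (w * t) - cos (w * v))"
    by (simp add: algebra_simps)
  ultimately show ?thesis
    by (simp add: mult.assoc)
qed

lemma integral_minus_const_le:
  fixes f :: "real \<Rightarrow> real"
  assumes "u \<le> v" and f: "f integrable_on {u..v}" and B: "\<And>t. t \<in> {u..v} \<Longrightarrow> \<bar>f t - c\<bar> \<le> B"
  shows "\<bar>integral {u..v} f - (v - u) * c\<bar> \<le> (v - u) * B"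
proof -
  have "integral {u..v} (\<lambda>t. f t - c) = integral {u..v} f - (v - u) * c"
    using integral_diff[OF f integrable_const_ivl[of c u v]] \<open>u \<le> v\<close> by (simp add: content_real)
  moreover have "norm (integral {u..v} (\<lambda>t. f t - c)) \<le> integral {u..v} (\<lambda>t. B)"
    by (rule integral_norm_bound_integral) (use f B in \<open>auto intro: integrable_diff\<close>)
  ultimately show ?thesis
    using \<open>u \<le> v\<close> by (simp add: content_real mult.commute)
qed

lemma integral_split_grid:
  fixes f :: "real \<Rightarrow> real" and M :: nat
  assumes M: "M > 0" and f: "f integrable_on {0..1}"
  shows "integral {0..1} f = (\<Sum>l<M. integral {l / M..Suc l / M} f)"
proof -
  have "j \<le> M \<Longrightarrow> integral {0..j / M} f = (\<Sum>l<j. integral {l / M..Suc l / M} f)" for j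
  proof (induction j)
    case (Suc j)
    have "f integrable_on {0..Suc j / M}"
      using Suc.prems M by (intro integrable_on_subinterval[OF f]) (auto simp: field_simps)
    then have "integral {0..Suc j / M} f = integral {0..j / M} f + integral {j / M..Suc j / M} f"
      using M by (intro Henstock_Kurzweil_Integration.integral_combine[symmetric]) (auto simp: divide_right_mono)
    with Suc show ?case
      by simp
  qed simp
  from this[of M] M show ?thesis
    by simp
qed

lemma grid_cell_error_monotone:
  fixes g :: "real \<Rightarrow> real" and M l :: nat
  assumes l: "1 \<le> l" "l < M"
    and nonneg: "\<And>t. t \<in> {0<..1} \<Longrightarrow> 0 \<le> g t"
    and mono: "mono_on {0<..1} g \<or> antimono_on {0<..1} g"
    and int: "(\<lambda>t. g t * cos (w * t)) integrable_on {0..1}"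
  shows "\<bar>g (Suc l / M) * cos (w * (Suc l / M)) / M - integral {l / M..Suc l / M} (\<lambda>t. g t * cos (w * t))\<bar>
         \<le> (\<bar>g (l / M) - g (Suc l / M)\<bar> + g (Suc l / M) * \<bar>w\<bar> / M) / M"
proof -
  let ?u = "l / M" and ?v = "Suc l / M"
  have uv: "0 < ?u" "?u \<le> ?v" "?v \<le> 1" and len: "?v - ?u = 1 / M"
    using l by (auto simp: field_simps)
  have "\<bar>integral {?u..?v} (\<lambda>t. g t * cos (w * t)) - (?v - ?u) * (g ?v * cos (w * ?v))\<bar>
      \<le> (?v - ?u) * (\<bar>g ?u - g ?v\<bar> + g ?v * \<bar>w\<bar> / M)"
  proof (rule integral_minus_const_le)
    show "(\<lambda>t. g t * cos (w * t)) integrable_on {?u..?v}"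
      using uv by (intro integrable_on_subinterval[OF int]) auto
    fix t assume t: "t \<in> {?u..?v}"
    have "\<bar>g t * cos (w * t) - g ?v * cos (w * ?v)\<bar> \<le> \<bar>g ?u - g ?v\<bar> + g ?v * \<bar>w\<bar> * (?v - t)"
      using t uv nonneg by (intro monotone_cos_oscillation[OF mono]) auto
    also have "g ?v * \<bar>w\<bar> * (?v - t) \<le> g ?v * \<bar>w\<bar> * (1 / M)"
      using t len uv nonneg by (intro mult_left_mono) auto
    finally show "\<bar>g t * cos (w * t) - g ?v * cos (w * ?v)\<bar> \<le> \<bar>g ?u - g ?v\<bar> + g ?v * \<bar>w\<bar> / M"
      by simp
  qed (use uv in auto)
  then show ?thesis
    unfolding len by (simp add: abs_minus_commute)
qed

lemma grid_oscillation_sum_monotone: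
  fixes g :: "real \<Rightarrow> real" and M :: nat
  assumes M: "M > 0"
    and nonneg: "\<And>t. t \<in> {0<..1} \<Longrightarrow> 0 \<le> g t"
    and mono: "mono_on {0<..1} g \<or> antimono_on {0<..1} g"
  shows "(\<Sum>l\<in>{1..<M}. \<bar>g (l / M) - g (Suc l / M)\<bar> + g (Suc l / M) * \<bar>w\<bar> / M)
    \<le> g (1 / M) + g 1 + \<bar>w\<bar> * (\<Sum>l\<in>{1..M}. g (l / M)) / M"
proof -
  have "(\<Sum>l\<in>{1..<M}. g (Suc l / M)) \<le> (\<Sum>l<M. g (Suc l / M))"
    using M nonneg by (intro sum_mono2) auto
  also have "\<dots> = (\<Sum>l\<in>{1..M}. g (l / M))"
    by (simp add: sum.atLeast1_atMost_eq)
  finally have "\<bar>w\<bar> / M * (\<Sum>l\<in>{1..<M}. g (Suc l / M)) \<le> \<bar>w\<bar> / M * (\<Sum>l\<in>{1..M}. g (l / M))"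
    by (intro mult_left_mono) auto
  moreover have "\<bar>g (1 / M) - g 1\<bar> \<le> g (1 / M) + g 1"
    using nonneg[of 1] nonneg[of "1 / M"] M by auto
  moreover have "(\<Sum>l\<in>{1..<M}. \<bar>g (l / M) - g (Suc l / M)\<bar> + g (Suc l / M) * \<bar>w\<bar> / M)
      = \<bar>g (1 / M) - g 1\<bar> + \<bar>w\<bar> / M * (\<Sum>l\<in>{1..<M}. g (Suc l / M))"
    unfolding sum.distrib sum_grid_variation_monotone[OF M mono] by (simp add: sum_distrib_left mult_ac)
  ultimately show ?thesis
    by simp
qed

lemma riemann_sum_minus_integral_cells:
  fixes h :: "real \<Rightarrow> real" and M :: nat
  assumes M: "M > 0" and int: "h integrable_on {0..1}"
  shows "(\<Sum>l\<in>{1..<M}. h (l / M)) / M - integral {0..1} h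
    = (\<Sum>l<M. h (Suc l / M) / M - integral {l / M..Suc l / M} h) - h 1 / M"
proof -
  have "(\<Sum>l<M. h (Suc l / M)) = (\<Sum>l\<in>{1..M}. h (l / M))"
    by (simp add: sum.atLeast1_atMost_eq)
  also have "{1..M} = insert M {1..<M}"
    using M by auto
  finally have "(\<Sum>l\<in>{1..<M}. h (l / M)) = (\<Sum>l<M. h (Suc l / M)) - h 1"
    using M by simp
  with integral_split_grid[OF M int] show ?thesis
    by (simp add: sum_subtractf sum_divide_distrib diff_divide_distrib)
qed

lemma first_grid_cell_error:
  fixes g :: "real \<Rightarrow> real" and M :: nat
  assumes M: "M > 0" and nonneg: "\<And>t. t \<in> {0..1} \<Longrightarrow> 0 \<le> g t"
    and int_g: "g integrable_on {0..1}" and int: "(\<lambda>t. g t * cos (w * t)) integrable_on {0..1}"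
  shows "\<bar>g (1 / M) * cos (w * (1 / M)) / M - integral {0..1 / M} (\<lambda>t. g t * cos (w * t))\<bar>
    \<le> g (1 / M) / M + integral {0..1 / M} g"
proof -
  have abs_le: "\<bar>g t * cos (w * t)\<bar> \<le> g t" if "t \<in> {0..1}" for t
    using nonneg[OF that] by (simp add: abs_mult mult_left_le)
  have "1 / real M \<le> 1"
    using M by simp
  then have "\<bar>integral {0..1 / M} (\<lambda>t. g t * cos (w * t))\<bar> \<le> integral {0..1 / M} g"
    unfolding real_norm_def[symmetric] using abs_le
    by (intro integral_norm_bound_integral integrable_on_subinterval[OF int]
        integrable_on_subinterval[OF int_g]) auto
  moreover have "\<bar>g (1 / M) * cos (w * (1 / M)) / M\<bar> \<le> g (1 / M) / M"
    using M abs_le[of "1 / M"] by (simp add: divide_right_mono)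
  ultimately show ?thesis
    using abs_triangle_ineq4[of "g (1 / M) * cos (w * (1 / M)) / M"
        "integral {0..1 / M} (\<lambda>t. g t * cos (w * t))"] by linarith
qed

lemma riemann_sum_cos_error_monotone:
  fixes g :: "real \<Rightarrow> real" and M :: nat
  assumes M: "M > 0"
    and nonneg: "\<And>t. t \<in> {0..1} \<Longrightarrow> 0 \<le> g t"
    and mono: "mono_on {0<..1} g \<or> antimono_on {0<..1} g"
    and int_g: "g integrable_on {0..1}"
    and int: "(\<lambda>t. g t * cos (w * t)) integrable_on {0..1}"
  shows "\<bar>(\<Sum>l\<in>{1..<M}. g (l / M) * cos (w * (l / M))) / M - integral {0..1} (\<lambda>t. g t * cos (w * t))\<bar>
         \<le> (2 * g (1 / M) + 2 * g 1 + \<bar>w\<bar> * (\<Sum>l\<in>{1..M}. g (l / M)) / M) / M + integral {0..1 / M} g"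
proof -
  define h where "h = (\<lambda>t. g t * cos (w * t))"
  define D where "D l = h (Suc l / M) / M - integral {l / M..Suc l / M} h" for l :: nat
  have error: "(\<Sum>l\<in>{1..<M}. h (l / M)) / M - integral {0..1} h = (\<Sum>l<M. D l) - h 1 / M"
    unfolding D_def by (rule riemann_sum_minus_integral_cells[OF M int[folded h_def]])
  have "\<bar>D 0\<bar> \<le> g (1 / M) / M + integral {0..1 / M} g"
    using first_grid_cell_error[OF M nonneg int_g int] by (simp add: D_def h_def)
  moreover have "(\<Sum>l\<in>{1..<M}. \<bar>D l\<bar>) \<le>
      (\<Sum>l\<in>{1..<M}. (\<bar>g (l / M) - g (Suc l / M)\<bar> + g (Suc l / M) * \<bar>w\<bar> / M) / M)"
    unfolding D_def h_def using nonneg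
    by (intro sum_mono grid_cell_error_monotone[OF _ _ _ mono int]) auto
  moreover have "\<dots> \<le> (g (1 / M) + g 1 + \<bar>w\<bar> * (\<Sum>l\<in>{1..M}. g (l / M)) / M) / M"
    unfolding sum_divide_distrib[symmetric] using M nonneg
    by (intro divide_right_mono grid_oscillation_sum_monotone[OF M _ mono]) auto
  moreover have "\<bar>\<Sum>l<M. D l\<bar> \<le> \<bar>D 0\<bar> + (\<Sum>l\<in>{1..<M}. \<bar>D l\<bar>)"
  proof -
    have "{..<M} = insert 0 {1..<M}"
      using M by auto
    then have "(\<Sum>l<M. D l) = D 0 + (\<Sum>l\<in>{1..<M}. D l)"
      by simp
    then show ?thesis
      using sum_abs[of D "{1..<M}"] abs_triangle_ineq[of "D 0" "\<Sum>l\<in>{1..<M}. D l"] by linarith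
  qed
  moreover have "\<bar>h 1 / M\<bar> \<le> g 1 / M"
    using nonneg[of 1] by (simp add: h_def abs_mult mult_left_le divide_right_mono)
  moreover have "\<bar>(\<Sum>l<M. D l) - h 1 / M\<bar> \<le> \<bar>\<Sum>l<M. D l\<bar> + \<bar>h 1 / M\<bar>"
    by (rule abs_triangle_ineq4)
  moreover have "(g (1 / M) / M + integral {0..1 / M} g) + (g (1 / M) + g 1 + \<bar>w\<bar> * (\<Sum>l\<in>{1..M}. g (l / M)) / M) / M
      + g 1 / M = (2 * g (1 / M) + 2 * g 1 + \<bar>w\<bar> * (\<Sum>l\<in>{1..M}. g (l / M)) / M) / M + integral {0..1 / M} g"
    using M by (simp add: field_simps)
  ultimately have "\<bar>(\<Sum>l\<in>{1..<M}. h (l / M)) / M - integral {0..1} h\<bar>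
      \<le> (2 * g (1 / M) + 2 * g 1 + \<bar>w\<bar> * (\<Sum>l\<in>{1..M}. g (l / M)) / M) / M + integral {0..1 / M} g"
    unfolding error by linarith
  then show ?thesis
    by (simp add: h_def)
qed

lemma abs_alternating_sum_even_le:
  fixes \<phi> :: "nat \<Rightarrow> real"
  shows "\<bar>\<Sum>l\<in>{1..2 * j}. (-1) ^ l * \<phi> l\<bar> \<le> (\<Sum>l\<in>{1..<2 * j}. \<bar>\<phi> (Suc l) - \<phi> l\<bar>)"
proof (induction j)
  case (Suc j)
  have "(\<Sum>l\<in>{1..2 * Suc j}. (-1) ^ l * \<phi> l) = (\<Sum>l\<in>{1..2 * j}. (-1) ^ l * \<phi> l) + (\<phi> (2 * j + 2) - \<phi> (2 * j + 1))"
    by simp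
  moreover have "(\<Sum>l\<in>{1..<2 * j}. \<bar>\<phi> (Suc l) - \<phi> l\<bar>) + \<bar>\<phi> (2 * j + 2) - \<phi> (2 * j + 1)\<bar>
      \<le> (\<Sum>l\<in>{1..<2 * Suc j}. \<bar>\<phi> (Suc l) - \<phi> l\<bar>)"
  proof -
    have "(\<Sum>l\<in>{1..<2 * j}. \<bar>\<phi> (Suc l) - \<phi> l\<bar>) \<le> (\<Sum>l\<in>{1..<Suc (2 * j)}. \<bar>\<phi> (Suc l) - \<phi> l\<bar>)"
      by (intro sum_mono2) auto
    then show ?thesis
      by simp
  qed
  ultimately show ?case
    using Suc.IH abs_triangle_ineq[of "\<Sum>l\<in>{1..2 * j}. (-1) ^ l * \<phi> l" "\<phi> (2 * j + 2) - \<phi> (2 * j + 1)"]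
    by linarith
qed simp

lemma abs_alternating_sum_le:
  fixes \<phi> :: "nat \<Rightarrow> real"
  shows "\<bar>\<Sum>l\<in>{1..n}. (-1) ^ l * \<phi> l\<bar> \<le> (\<Sum>l\<in>{1..<n}. \<bar>\<phi> (Suc l) - \<phi> l\<bar>) + \<bar>\<phi> n\<bar>"
proof (cases "even n")
  case True
  then obtain j where "n = 2 * j"
    by blast
  then show ?thesis
    using abs_alternating_sum_even_le[of \<phi> j] by simp
next
  case False
  then obtain j where j: "n = Suc (2 * j)"
    by (metis oddE Suc_eq_plus1)
  have "(\<Sum>l\<in>{1..<2 * j}. \<bar>\<phi> (Suc l) - \<phi> l\<bar>) \<le> (\<Sum>l\<in>{1..<n}. \<bar>\<phi> (Suc l) - \<phi> l\<bar>)"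
    unfolding j by (intro sum_mono2) auto
  moreover have "(\<Sum>l\<in>{1..n}. (-1) ^ l * \<phi> l) = (\<Sum>l\<in>{1..2 * j}. (-1) ^ l * \<phi> l) - \<phi> n"
    using j by simp
  ultimately show ?thesis
    using abs_alternating_sum_even_le[of \<phi> j] abs_triangle_ineq4[of "\<Sum>l\<in>{1..2 * j}. (-1) ^ l * \<phi> l" "\<phi> n"]
    by linarith
qed

lemma grid_cos_variation_monotone:
  fixes g :: "real \<Rightarrow> real" and M :: nat
  assumes M: "M > 0"
    and nonneg: "\<And>t. t \<in> {0<..1} \<Longrightarrow> 0 \<le> g t"
    and mono: "mono_on {0<..1} g \<or> antimono_on {0<..1} g"
  shows "(\<Sum>l\<in>{1..<M}. \<bar>g (Suc l / M) * cos (w * (Suc l / M)) - g (l / M) * cos (w * (l / M))\<bar>)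
    \<le> g (1 / M) + g 1 + \<bar>w\<bar> * (\<Sum>l\<in>{1..M}. g (l / M)) / M"
proof -
  note grid = grid_point_in_unit_interval[OF M]
  have "(\<Sum>l\<in>{1..<M}. \<bar>g (Suc l / M) * cos (w * (Suc l / M)) - g (l / M) * cos (w * (l / M))\<bar>)
      \<le> (\<Sum>l\<in>{1..<M}. \<bar>g (l / M) - g (Suc l / M)\<bar> + g (Suc l / M) * \<bar>w\<bar> / M)"
  proof (intro sum_mono)
    fix l assume l: "l \<in> {1..<M}"
    have "\<bar>g (l / M) * cos (w * (l / M)) - g (Suc l / M) * cos (w * (Suc l / M))\<bar>
        \<le> \<bar>g (l / M) - g (Suc l / M)\<bar> + g (Suc l / M) * \<bar>w\<bar> * (Suc l / M - l / M)"
      using l grid nonneg by (intro monotone_cos_oscillation[OF mono]) (auto simp: divide_right_mono)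
    moreover have "Suc l / M - l / M = 1 / M"
      using M by (simp add: field_simps)
    ultimately show "\<bar>g (Suc l / M) * cos (w * (Suc l / M)) - g (l / M) * cos (w * (l / M))\<bar>
        \<le> \<bar>g (l / M) - g (Suc l / M)\<bar> + g (Suc l / M) * \<bar>w\<bar> / M"
      by (simp add: abs_minus_commute)
  qed
  also have "\<dots> \<le> g (1 / M) + g 1 + \<bar>w\<bar> * (\<Sum>l\<in>{1..M}. g (l / M)) / M"
    by (rule grid_oscillation_sum_monotone[OF M nonneg mono])
  finally show ?thesis .
qed

lemma alternating_grid_sum_cos_monotone:
  fixes g :: "real \<Rightarrow> real" and M :: nat
  assumes M: "M > 0"
    and nonneg: "\<And>t. t \<in> {0<..1} \<Longrightarrow> 0 \<le> g t"
    and mono: "mono_on {0<..1} g \<or> antimono_on {0<..1} g"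
  shows "\<bar>\<Sum>l\<in>{1..<M}. (-1) ^ l * (g (l / M) * cos (w * (l / M)))\<bar>
         \<le> 2 * g (1 / M) + 2 * g 1 + \<bar>w\<bar> * (\<Sum>l\<in>{1..M}. g (l / M)) / M"
proof (cases "M = 1")
  case True
  then show ?thesis
    using nonneg[of 1] by simp
next
  case False
  define \<phi> where "\<phi> l = g (l / M) * cos (w * (l / M))" for l :: nat
  define n where "n = M - 1"
  note grid = grid_point_in_unit_interval[OF M]
  have "{1..<M} = {1..n}"
    using M by (auto simp: n_def)
  then have "\<bar>\<Sum>l\<in>{1..<M}. (-1) ^ l * \<phi> l\<bar> \<le> (\<Sum>l\<in>{1..<n}. \<bar>\<phi> (Suc l) - \<phi> l\<bar>) + \<bar>\<phi> n\<bar>"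
    using abs_alternating_sum_le by simp
  moreover have "(\<Sum>l\<in>{1..<n}. \<bar>\<phi> (Suc l) - \<phi> l\<bar>) \<le> (\<Sum>l\<in>{1..<M}. \<bar>\<phi> (Suc l) - \<phi> l\<bar>)"
    by (intro sum_mono2) (auto simp: n_def)
  moreover have "(\<Sum>l\<in>{1..<M}. \<bar>\<phi> (Suc l) - \<phi> l\<bar>) \<le> g (1 / M) + g 1 + \<bar>w\<bar> * (\<Sum>l\<in>{1..M}. g (l / M)) / M"
    unfolding \<phi>_def by (rule grid_cos_variation_monotone[OF M nonneg mono])
  moreover have "\<bar>\<phi> n\<bar> \<le> g (1 / M) + g 1"
  proof -
    have "n \<in> {1..M}"
      using M False by (auto simp: n_def)
    then have "\<bar>\<phi> n\<bar> \<le> g (n / M)"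
      using nonneg grid by (simp add: \<phi>_def abs_mult mult_left_le)
    also have "\<dots> \<le> max (g (1 / M)) (g (M / M))"
      using monotone_on_between[OF mono grid grid grid, of 1 n M] \<open>n \<in> {1..M}\<close> M
      by (auto simp: divide_right_mono)
    also have "\<dots> \<le> g (1 / M) + g 1"
      using nonneg[of 1] nonneg[of "1 / M"] M by auto
    finally show ?thesis .
  qed
  ultimately show ?thesis
    unfolding \<phi>_def by linarith
qed

lemma antimono_grid_sum_le_integral:
  fixes f :: "real \<Rightarrow> real" and M :: nat
  assumes M: "M > 0" and f: "antimono_on {0<..1} f" and int: "f integrable_on {0..1}"
  shows "(\<Sum>l\<in>{1..M}. f (l / M)) / M \<le> integral {0..1} f"
proof -
  have cell: "f (Suc l / M) / M \<le> integral {l / M..Suc l / M} f" if "l < M" for l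
  proof -
    let ?u = "l / M" and ?v = "Suc l / M"
    have uv: "0 \<le> ?u" "?u \<le> ?v" "?v \<le> 1" and len: "?v - ?u = 1 / M"
      using that by (auto simp: field_simps)
    have "f integrable_on {?u<..<?v}"
      using uv integrable_on_subinterval[OF int, of ?u ?v] by (simp add: integrable_on_Icc_iff_Ioo)
    moreover have "f ?v \<le> f t" if t: "t \<in> {?u<..<?v}" for t
    proof -
      from t have "?u < t"
        by simp
      with uv(1) have "0 < t"
        by linarith
      with t uv show ?thesis
        by (intro monotone_onD[OF f]) auto
    qed
    ultimately have "integral {?u<..<?v} (\<lambda>_. f ?v) \<le> integral {?u<..<?v} f"
      by (intro integral_le) (auto simp: integrable_on_Icc_iff_Ioo[symmetric])
    then show ?thesis
      using uv len by (simp add: integral_open_interval_real[symmetric] content_real)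
  qed
  have "(\<Sum>l\<in>{1..M}. f (l / M)) / M = (\<Sum>l<M. f (Suc l / M) / M)"
    by (simp add: sum.atLeast1_atMost_eq sum_divide_distrib)
  also have "\<dots> \<le> (\<Sum>l<M. integral {l / M..Suc l / M} f)"
    using cell by (intro sum_mono) auto
  also have "\<dots> = integral {0..1} f"
    using integral_split_grid[OF M int] ..
  finally show ?thesis .
qed

section \<open>Grid estimates for the symbol\<close>

text \<open>The factor \<open>4 powr a * 3 powr b\<close> comes from \<open>sin x \<ge> x / 3\<close>, the factor
  \<open>1 / (1 - b)\<close> is the integral of \<open>t powr - b\<close> over \<open>[0, 1]\<close>; here \<open>b = max 0 (- 2 * a)\<close>.\<close>
definition lap_symbol_const :: "real \<Rightarrow> real" where
  "lap_symbol_const a = 4 powr a * 3 powr max 0 (- 2 * a) / (1 - max 0 (- 2 * a))"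

lemma lap_symbol_const_ge:
  assumes "a > -1/2"
  shows "4 powr a * 3 powr max 0 (- 2 * a) \<le> lap_symbol_const a"
proof -
  have "0 < 1 - max 0 (- 2 * a)" "1 - max 0 (- 2 * a) \<le> 1"
    using assms by auto
  then show ?thesis
    unfolding lap_symbol_const_def by (simp add: le_divide_eq mult_left_le)
qed

lemma lap_symbol_le_const:
  assumes "a > -1/2" "0 < t" "t \<le> 1"
  shows "lap_symbol a t \<le> lap_symbol_const a * t powr - max 0 (- 2 * a)"
  using lap_symbol_le_powr[of t a] lap_symbol_const_ge[OF assms(1)] assms(2,3)
  by (smt (verit) mult_right_mono powr_ge_zero)

lemma lap_symbol_first_grid_point:
  fixes M :: nat
  assumes "a > -1/2" "M > 0"
  shows "lap_symbol a (1 / M) \<le> lap_symbol_const a * M powr max 0 (- 2 * a)"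
  using lap_symbol_le_const[of a "1 / M"] assms by (simp add: powr_minus_divide powr_divide)

lemma lap_symbol_integral_first_cell:
  fixes M :: nat
  assumes a: "a > -1/2" and M: "M > 0"
  shows "integral {0..1 / M} (lap_symbol a) \<le> lap_symbol_const a * M powr max 0 (- 2 * a) / M"
proof -
  define b where "b = max 0 (- 2 * a)"
  have b: "0 \<le> b" "b < 1"
    using a by (auto simp: b_def)
  have powr_int: "((\<lambda>t. t powr - b) has_integral (1 / M) powr (1 - b) / (1 - b)) {0..1 / M}"
    using has_integral_powr_from_0[of "- b" "1 / M"] b by simp
  have "integral {0..1 / M} (lap_symbol a) \<le> integral {0..1 / M} (\<lambda>t. 4 powr a * 3 powr b * t powr - b)"
  proof (rule integral_le)
    show "lap_symbol a integrable_on {0..1 / M}"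
      using M by (intro integrable_on_subinterval[OF lap_symbol_integrable[OF a]]) auto
    show "(\<lambda>t. 4 powr a * 3 powr b * t powr - b) integrable_on {0..1 / M}"
      using powr_int by (intro integrable_on_mult_right) (auto simp: integrable_on_def)
    have "1 / real M \<le> 1"
      using M by simp
    then show "lap_symbol a t \<le> 4 powr a * 3 powr b * t powr - b" if "t \<in> {0..1 / M}" for t
      unfolding b_def using that by (intro lap_symbol_le_powr) auto
  qed
  also have "\<dots> = 4 powr a * 3 powr b * ((1 / M) powr (1 - b) / (1 - b))"
    using powr_int by (simp add: integral_unique)
  also have "\<dots> = lap_symbol_const a * M powr b / M"
    using M b by (simp add: lap_symbol_const_def b_def powr_diff powr_divide field_simps)
  finally show ?thesis
    by (simp add: b_def)
qed

lemma lap_symbol_grid_sum: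
  fixes M :: nat
  assumes a: "a > -1/2" and M: "M > 0"
  shows "(\<Sum>l\<in>{1..M}. lap_symbol a (l / M)) \<le> lap_symbol_const a * M"
proof -
  define b where "b = max 0 (- 2 * a)"
  have b: "0 \<le> b" "b < 1"
    using a by (auto simp: b_def)
  have powr_int: "((\<lambda>t. t powr - b) has_integral 1 / (1 - b)) {0..1}"
    using has_integral_powr_from_0[of "- b" 1] b by simp
  have "(\<Sum>l\<in>{1..M}. lap_symbol a (l / M)) \<le> (\<Sum>l\<in>{1..M}. 4 powr a * 3 powr b * (l / M) powr - b)"
    unfolding b_def by (intro sum_mono lap_symbol_le_powr) auto
  also have "\<dots> = 4 powr a * 3 powr b * (\<Sum>l\<in>{1..M}. (l / M) powr - b)"
    by (simp add: sum_distrib_left)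
  also have "\<dots> = 4 powr a * 3 powr b * M * ((\<Sum>l\<in>{1..M}. (l / M) powr - b) / M)"
    using M by simp
  also have "(\<Sum>l\<in>{1..M}. (l / M) powr - b) / M \<le> integral {0..1} (\<lambda>t. t powr - b)"
  proof (rule antimono_grid_sum_le_integral[OF M])
    show "antimono_on {0<..1} (\<lambda>t. t powr - b)"
      using b by (intro monotone_onI powr_mono2') auto
  qed (use powr_int in \<open>auto simp: integrable_on_def\<close>)
  also have "integral {0..1} (\<lambda>t. t powr - b) = 1 / (1 - b)"
    using powr_int by (rule integral_unique)
  finally show ?thesis
    using M by (simp add: lap_symbol_const_def b_def mult_left_mono)
qed

lemma lap_symbol_grid_bound:
  fixes M :: nat
  assumes a: "a > -1/2" and M: "M > 0"
  shows "2 * lap_symbol a (1 / M) + 2 * lap_symbol a 1 + \<bar>w\<bar> * (\<Sum>l\<in>{1..M}. lap_symbol a (l / M)) / M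
    \<le> lap_symbol_const a * (4 * M powr max 0 (- 2 * a) + \<bar>w\<bar>)"
proof -
  let ?c = "lap_symbol_const a" and ?P = "M powr max 0 (- 2 * a)"
  have P: "1 \<le> ?P"
    using M by (intro ge_one_powr_ge_zero) auto
  have c: "4 powr a \<le> ?c"
    using lap_symbol_const_ge[OF a] order_trans[of "4 powr a" "4 powr a * 3 powr max 0 (- 2 * a)"]
    by (simp add: ge_one_powr_ge_zero)
  then have "0 \<le> ?c"
    using powr_ge_zero[of 4 a] by linarith
  then have "lap_symbol a 1 \<le> ?c * ?P"
    using c P mult_left_mono[of 1 ?P ?c] by (simp add: lap_symbol_one)
  moreover have "\<bar>w\<bar> * (\<Sum>l\<in>{1..M}. lap_symbol a (l / M)) / M \<le> \<bar>w\<bar> * ?c"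
    using lap_symbol_grid_sum[OF a M] M by (simp add: divide_le_eq mult_left_mono mult.assoc)
  ultimately show ?thesis
    using lap_symbol_first_grid_point[OF a M] by (simp add: algebra_simps)
qed

section \<open>Comparison of the finite and the infinite matrix\<close>

lemma sin_mult_sin_eigenvalue_powr:
  fixes p q d s :: real and l M :: nat
  assumes l: "0 < l" "l < M" and d: "p - q = d" and s: "p + q = s + M"
  shows "2 * (sin (p * (pi * l / M)) * sin (q * (pi * l / M))) * (2 - 2 * cos (pi * l / M)) powr a
     = lap_symbol a (l / M) * cos (d * pi * (l / M))
       - (-1) ^ l * (lap_symbol a (l / M) * cos (s * pi * (l / M)))"
proof -
  define A where "A = p * (pi * l / M)"
  define B where "B = q * (pi * l / M)"
  have diff: "A - B = d * pi * (l / M)"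
    using d l by (simp add: A_def B_def field_simps)
  have "A + B = (s + M) * (pi * l / M)"
    by (simp add: A_def B_def s[symmetric] distrib_right add_divide_distrib)
  then have sum: "A + B = s * pi * (l / M) + pi * l"
    using l by (simp add: field_simps)
  have "2 * (sin A * sin B) = cos (A - B) - cos (A + B)"
    by (simp add: cos_diff cos_add)
  also have "\<dots> = cos (d * pi * (l / M)) - (-1) ^ l * cos (s * pi * (l / M))"
    unfolding diff sum by (simp add: cos_add)
  finally have trig: "2 * (sin (p * (pi * l / M)) * sin (q * (pi * l / M)))
      = cos (d * pi * (l / M)) - (-1) ^ l * cos (s * pi * (l / M))"
    by (simp only: A_def B_def)
  have "(2 - 2 * cos (pi * l / M)) powr a = lap_symbol a (l / M)"
    using lap_symbol_eigenvalue[of "l / M" a] l by simp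
  then show ?thesis
    unfolding trig by (simp add: algebra_simps)
qed

lemma mat_rpow_hbar_cos_sums:
  fixes M m :: nat
  assumes M: "M = 2 * m + 2" and x: "x \<in> {-int m..int m}" and y: "y \<in> {-int m..int m}"
  shows "mat_rpow {-int m..int m} hbar a x y =
     (\<Sum>l\<in>{1..<M}. lap_symbol a (l / M) * cos (real_of_int (x - y) * pi * (l / M))) / M
     - (\<Sum>l\<in>{1..<M}. (-1) ^ l * (lap_symbol a (l / M) * cos (real_of_int (x + y) * pi * (l / M)))) / M"
proof -
  define p where "p = real_of_int (x + int m + 1)"
  define q where "q = real_of_int (y + int m + 1)"
  define G where "G t = 2 / M * (sin (p * (pi * real_of_int t / M)) * sin (q * (pi * real_of_int t / M)))
      * (2 - 2 * cos (pi * real_of_int t / M)) powr a" for t :: int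
  have "mat_rpow {-int m..int m} hbar a x y =
      (\<Sum>l\<in>{-int m..int m}. dirichlet_mode m x l * dirichlet_eigenvalue m l powr a * dirichlet_mode m y l)"
    by (rule mat_rpow_hbar[OF x y])
  also have "\<dots> = (\<Sum>l\<in>{-int m..int m}. G (l + int m + 1))"
    unfolding G_def dirichlet_mode_def dirichlet_eigenvalue_def p_def q_def M
    by (intro sum.cong refl) (simp add: mult_ac sqrt_mult_self_left)
  also have "\<dots> = (\<Sum>l\<in>{1..<M}. G (int l))"
    by (rule sum_centered_interval_shift[OF M])
  also have "\<dots> = (\<Sum>l\<in>{1..<M}. (lap_symbol a (l / M) * cos (real_of_int (x - y) * pi * (l / M))
       - (-1) ^ l * (lap_symbol a (l / M) * cos (real_of_int (x + y) * pi * (l / M)))) / M)"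
  proof (intro sum.cong refl)
    fix l assume "l \<in> {1..<M}"
    moreover have "p - q = real_of_int (x - y)" "p + q = real_of_int (x + y) + M"
      by (simp_all add: p_def q_def M)
    ultimately show "G (int l) = (lap_symbol a (l / M) * cos (real_of_int (x - y) * pi * (l / M))
       - (-1) ^ l * (lap_symbol a (l / M) * cos (real_of_int (x + y) * pi * (l / M)))) / M"
      using sin_mult_sin_eigenvalue_powr[of l M p q _ _ a] by (simp add: G_def)
  qed
  also have "\<dots> = (\<Sum>l\<in>{1..<M}. lap_symbol a (l / M) * cos (real_of_int (x - y) * pi * (l / M))) / M
     - (\<Sum>l\<in>{1..<M}. (-1) ^ l * (lap_symbol a (l / M) * cos (real_of_int (x + y) * pi * (l / M)))) / M"
    by (simp add: sum_subtractf diff_divide_distrib sum_divide_distrib)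
  finally show ?thesis .
qed

lemma lap_symbol_riemann_sum_error:
  fixes M :: nat
  assumes a: "a > -1/2" and M: "M > 0"
  shows "\<bar>(\<Sum>l\<in>{1..<M}. lap_symbol a (l / M) * cos (w * (l / M))) / M
           - integral {0..1} (\<lambda>t. lap_symbol a t * cos (w * t))\<bar>
         \<le> lap_symbol_const a * (5 * M powr max 0 (- 2 * a) + \<bar>w\<bar>) / M"
proof -
  let ?c = "lap_symbol_const a" and ?P = "M powr max 0 (- 2 * a)"
  have "\<bar>(\<Sum>l\<in>{1..<M}. lap_symbol a (l / M) * cos (w * (l / M))) / M
      - integral {0..1} (\<lambda>t. lap_symbol a t * cos (w * t))\<bar>
      \<le> (2 * lap_symbol a (1 / M) + 2 * lap_symbol a 1 + \<bar>w\<bar> * (\<Sum>l\<in>{1..M}. lap_symbol a (l / M)) / M) / M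
        + integral {0..1 / M} (lap_symbol a)"
    using lap_symbol_nonneg by (intro riemann_sum_cos_error_monotone[OF M _ lap_symbol_monotone]
        lap_symbol_integrable lap_symbol_cos_integrable a)
  also have "\<dots> \<le> ?c * (4 * ?P + \<bar>w\<bar>) / M + ?c * ?P / M"
    using lap_symbol_grid_bound[OF a M, of w] lap_symbol_integral_first_cell[OF a M] M
    by (intro add_mono divide_right_mono) auto
  also have "\<dots> = ?c * (5 * ?P + \<bar>w\<bar>) / M"
    using M by (simp add: field_simps)
  finally show ?thesis .
qed

lemma lap_symbol_alternating_sum:
  fixes M :: nat
  assumes a: "a > -1/2" and M: "M > 0"
  shows "\<bar>(\<Sum>l\<in>{1..<M}. (-1) ^ l * (lap_symbol a (l / M) * cos (w * (l / M)))) / M\<bar>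
         \<le> lap_symbol_const a * (4 * M powr max 0 (- 2 * a) + \<bar>w\<bar>) / M"
proof -
  have "\<bar>\<Sum>l\<in>{1..<M}. (-1) ^ l * (lap_symbol a (l / M) * cos (w * (l / M)))\<bar>
      \<le> 2 * lap_symbol a (1 / M) + 2 * lap_symbol a 1 + \<bar>w\<bar> * (\<Sum>l\<in>{1..M}. lap_symbol a (l / M)) / M"
    using lap_symbol_nonneg by (intro alternating_grid_sum_cos_monotone[OF M _ lap_symbol_monotone])
  also have "\<dots> \<le> lap_symbol_const a * (4 * M powr max 0 (- 2 * a) + \<bar>w\<bar>)"
    by (rule lap_symbol_grid_bound[OF a M])
  finally show ?thesis
    using M by (simp add: divide_right_mono)
qed

lemma mat_rpow_hbar_error:
  fixes M m :: nat
  assumes a: "a > -1/2" and M: "M = 2 * m + 2"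
    and x: "x \<in> {-int m..int m}" and y: "y \<in> {-int m..int m}"
  shows "\<bar>mat_rpow {-int m..int m} hbar a x y
           - integral {0..1} (\<lambda>t. lap_symbol a t * cos (real_of_int (x - y) * pi * t))\<bar>
         \<le> lap_symbol_const a * (9 * M powr max 0 (- 2 * a) + \<bar>real_of_int (x - y) * pi\<bar> + \<bar>real_of_int (x + y) * pi\<bar>) / M"
proof -
  define w1 where "w1 = real_of_int (x - y) * pi"
  define w2 where "w2 = real_of_int (x + y) * pi"
  have M0: "M > 0"
    using M by simp
  have "\<bar>mat_rpow {-int m..int m} hbar a x y - integral {0..1} (\<lambda>t. lap_symbol a t * cos (w1 * t))\<bar>
      \<le> \<bar>(\<Sum>l\<in>{1..<M}. lap_symbol a (l / M) * cos (w1 * (l / M))) / M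
          - integral {0..1} (\<lambda>t. lap_symbol a t * cos (w1 * t))\<bar>
        + \<bar>(\<Sum>l\<in>{1..<M}. (-1) ^ l * (lap_symbol a (l / M) * cos (w2 * (l / M)))) / M\<bar>"
    unfolding mat_rpow_hbar_cos_sums[OF M x y] w1_def[symmetric] w2_def[symmetric]
    by (rule order_trans[OF eq_refl abs_triangle_ineq4]) (simp add: algebra_simps)
  also have "\<dots> \<le> lap_symbol_const a * (5 * M powr max 0 (- 2 * a) + \<bar>w1\<bar>) / M
      + lap_symbol_const a * (4 * M powr max 0 (- 2 * a) + \<bar>w2\<bar>) / M"
    by (intro add_mono lap_symbol_riemann_sum_error lap_symbol_alternating_sum a M0)
  also have "\<dots> = lap_symbol_const a * (9 * M powr max 0 (- 2 * a) + \<bar>w1\<bar> + \<bar>w2\<bar>) / M"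
    using M0 by (simp add: field_simps)
  finally show ?thesis
    unfolding w1_def w2_def .
qed

lemma abs_of_int_mult_pi_le: "\<bar>r\<bar> \<le> 2 * int n \<Longrightarrow> \<bar>real_of_int r * pi\<bar> \<le> 8 * real n"
proof -
  assume "\<bar>r\<bar> \<le> 2 * int n"
  then have "\<bar>real_of_int r\<bar> \<le> 2 * real n"
    by linarith
  then have "\<bar>real_of_int r\<bar> * pi \<le> 2 * real n * 4"
    using pi_less_4 by (intro mult_mono) auto
  then show ?thesis
    by (simp add: abs_mult)
qed

lemma mat_rpow_hbar_error_centered:
  fixes M m n :: nat
  assumes a: "a > -1/2" and M: "M = 2 * m + 2" and "n \<le> m"
    and x: "x \<in> {-int n..int n}" and y: "y \<in> {-int n..int n}"
  shows "\<bar>mat_rpow {-int m..int m} hbar a x y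
           - integral {0..1} (\<lambda>t. lap_symbol a t * cos (real_of_int (x - y) * pi * t))\<bar>
         \<le> 16 * lap_symbol_const a * (M powr max 0 (- 2 * a) + n) / M"
proof -
  let ?c = "lap_symbol_const a" and ?P = "M powr max 0 (- 2 * a)"
  have "x \<in> {-int m..int m}" "y \<in> {-int m..int m}"
    using x y \<open>n \<le> m\<close> by auto
  then have "\<bar>mat_rpow {-int m..int m} hbar a x y
      - integral {0..1} (\<lambda>t. lap_symbol a t * cos (real_of_int (x - y) * pi * t))\<bar>
      \<le> ?c * (9 * ?P + \<bar>real_of_int (x - y) * pi\<bar> + \<bar>real_of_int (x + y) * pi\<bar>) / M"
    by (rule mat_rpow_hbar_error[OF a M])
  also have "\<dots> \<le> ?c * (16 * ?P + 16 * n) / M"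
  proof -
    have "\<bar>x - y\<bar> \<le> 2 * int n" "\<bar>x + y\<bar> \<le> 2 * int n"
      using x y by auto
    then have "\<bar>real_of_int (x - y) * pi\<bar> \<le> 8 * real n" "\<bar>real_of_int (x + y) * pi\<bar> \<le> 8 * real n"
      using abs_of_int_mult_pi_le by blast+
    moreover have "1 \<le> ?P"
      using M by (simp add: ge_one_powr_ge_zero)
    moreover have "0 \<le> ?c"
      using a by (simp add: lap_symbol_const_def)
    ultimately show ?thesis
      by (intro divide_right_mono mult_left_mono) auto
  qed
  finally show ?thesis
    by (simp add: algebra_simps)
qed

lemma hLambda_error_bound:
  assumes a: "a > -1/2"
  shows "\<exists>C\<ge>0. \<forall>n m. n \<le> m \<longrightarrow> (\<forall>j\<in>{1..int (2 * n + 1)}. \<forall>k\<in>{1..int (2 * n + 1)}.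
           \<bar>hLambda n m a j k - hZ a j k\<bar>
             \<le> C * (real (2 * m + 2) powr max 0 (- 2 * a) + n) / real (2 * m + 2))"
proof (intro exI[of _ "16 * lap_symbol_const a"] conjI allI impI ballI)
  show "0 \<le> 16 * lap_symbol_const a"
    using a by (simp add: lap_symbol_const_def)
  fix n m :: nat and j k :: int
  assume "n \<le> m" and j: "j \<in> {1..int (2 * n + 1)}" and k: "k \<in> {1..int (2 * n + 1)}"
  have "j - int n - 1 \<in> {-int n..int n}" "k - int n - 1 \<in> {-int n..int n}"
    using j k by auto
  from mat_rpow_hbar_error_centered[OF a refl \<open>n \<le> m\<close> this] show "\<bar>hLambda n m a j k - hZ a j k\<bar>
      \<le> 16 * lap_symbol_const a * (real (2 * m + 2) powr max 0 (- 2 * a) + n) / real (2 * m + 2)"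
    by (simp add: hLambda_def hZ_eq_integral[OF a])
qed

lemma centered_rate_le:
  fixes n m :: nat
  assumes "n \<le> m"
  shows "(1 + real n) / real (2 * m + 2) \<le> real (2 * n + 1) / real (2 * m + 1)"
  using assms by (intro frac_le) auto

lemma centered_rate_powr_le:
  fixes n m :: nat
  assumes b: "0 \<le> b" "b \<le> 1"
  shows "(real (2 * m + 2) powr b + n) / real (2 * m + 2)
    \<le> 2 * ((real (2 * m + 1) powr b + real (2 * n + 1) powr (1 + b)) / real (2 * m + 1))"
proof -
  have "real (2 * m + 2) powr b \<le> (2 * real (2 * m + 1)) powr b"
    using b by (intro powr_mono2) auto
  also have "\<dots> = 2 powr b * real (2 * m + 1) powr b"
    by (rule powr_mult)
  also have "\<dots> \<le> 2 * real (2 * m + 1) powr b"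
    using b powr_mono[of b 1 "2::real"] by (intro mult_right_mono) auto
  finally have m: "real (2 * m + 2) powr b \<le> 2 * real (2 * m + 1) powr b" .
  have "real n \<le> real (2 * n + 1) powr 1"
    by simp
  also have "\<dots> \<le> real (2 * n + 1) powr (1 + b)"
    using b by (intro powr_mono) auto
  finally have "real (2 * m + 2) powr b + n \<le> 2 * (real (2 * m + 1) powr b + real (2 * n + 1) powr (1 + b))"
    using m by simp
  then have "(real (2 * m + 2) powr b + n) / real (2 * m + 2)
    \<le> 2 * (real (2 * m + 1) powr b + real (2 * n + 1) powr (1 + b)) / real (2 * m + 1)"
    by (intro frac_le) auto
  then show ?thesis
    by simp
qed

lemma hLambda_error_nonneg_exponent:
  assumes "0 \<le> a"
  shows "\<exists>C. \<forall>n m :: nat. n \<le> m \<longrightarrow> (\<forall>j\<in>{1..int (2 * n + 1)}. \<forall>k\<in>{1..int (2 * n + 1)}.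
           \<bar>hLambda n m a j k - hZ a j k\<bar> \<le> C * (real (2 * n + 1) / real (2 * m + 1)))"
proof -
  obtain C where "0 \<le> C" and error: "\<forall>n m. n \<le> m \<longrightarrow> (\<forall>j\<in>{1..int (2 * n + 1)}. \<forall>k\<in>{1..int (2 * n + 1)}.
      \<bar>hLambda n m a j k - hZ a j k\<bar> \<le> C * (real (2 * m + 2) powr max 0 (- 2 * a) + n) / real (2 * m + 2))"
    using hLambda_error_bound[of a] assms by auto
  have rate: "C * (real (2 * m + 2) powr max 0 (- 2 * a) + n) / real (2 * m + 2)
      \<le> C * (real (2 * n + 1) / real (2 * m + 1))" if "n \<le> m" for n m :: nat
    using mult_left_mono[OF centered_rate_le[OF that] \<open>0 \<le> C\<close>] assms by simp
  show ?thesis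
    by (intro exI[of _ C] allI impI ballI order_trans[OF error[rule_format] rate])
qed

lemma hLambda_error_neg_exponent:
  assumes "-1/2 < a" "a < 0"
  shows "\<exists>C. \<forall>n m :: nat. n \<le> m \<longrightarrow> (\<forall>j\<in>{1..int (2 * n + 1)}. \<forall>k\<in>{1..int (2 * n + 1)}.
           \<bar>hLambda n m a j k - hZ a j k\<bar>
             \<le> C * ((real (2 * m + 1) powr (-2 * a) + real (2 * n + 1) powr (1 - 2 * a)) / real (2 * m + 1)))"
proof -
  obtain C where "0 \<le> C" and error: "\<forall>n m. n \<le> m \<longrightarrow> (\<forall>j\<in>{1..int (2 * n + 1)}. \<forall>k\<in>{1..int (2 * n + 1)}.
      \<bar>hLambda n m a j k - hZ a j k\<bar> \<le> C * (real (2 * m + 2) powr max 0 (- 2 * a) + n) / real (2 * m + 2))"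
    using hLambda_error_bound[of a] assms by auto
  have rate: "C * (real (2 * m + 2) powr max 0 (- 2 * a) + n) / real (2 * m + 2)
      \<le> 2 * C * ((real (2 * m + 1) powr (-2 * a) + real (2 * n + 1) powr (1 - 2 * a)) / real (2 * m + 1))"
    for n m :: nat
  proof -
    have "max 0 (- 2 * a) = - 2 * a" "1 + - 2 * a = 1 - 2 * a"
      using assms by auto
    then have "(real (2 * m + 2) powr max 0 (- 2 * a) + n) / real (2 * m + 2)
      \<le> 2 * ((real (2 * m + 1) powr (-2 * a) + real (2 * n + 1) powr (1 - 2 * a)) / real (2 * m + 1))"
      using centered_rate_powr_le[of "- 2 * a" m n] assms by simp
    from mult_left_mono[OF this \<open>0 \<le> C\<close>] show ?thesis
      by (simp add: mult_ac)
  qed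
  show ?thesis
    by (intro exI[of _ "2 * C"] allI impI ballI order_trans[OF error[rule_format] rate])
qed

theorem lemma3p3:
  fixes a :: real
  assumes "a > -1/2"
  shows "(0 \<le> a \<longrightarrow> (\<exists>C. \<forall>n m :: nat. n \<le> m \<longrightarrow>
            (\<forall>j \<in> {1..int (card {-int n..int n})}. \<forall>k \<in> {1..int (card {-int n..int n})}.
               \<bar>hLambda n m a j k - hZ a j k\<bar>
                 \<le> C * (real (card {-int n..int n}) / real (card {-int m..int m})))))
       \<and> (a < 0 \<longrightarrow> (\<exists>C. \<forall>n m :: nat. n \<le> m \<longrightarrow>
            (\<forall>j \<in> {1..int (card {-int n..int n})}. \<forall>k \<in> {1..int (card {-int n..int n})}.
               \<bar>hLambda n m a j k - hZ a j k\<bar>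
                 \<le> C * ((real (card {-int m..int m}) powr (-2 * a)
                         + real (card {-int n..int n}) powr (1 - 2 * a))
                        / real (card {-int m..int m})))))"
proof -
  have card: "card {-int n..int n} = 2 * n + 1" for n
    by simp
  show ?thesis
    unfolding card using assms
    by (intro conjI impI hLambda_error_nonneg_exponent hLambda_error_neg_exponent) auto
qed

end
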